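(* Let $N\ge1$, $p\ge2$, $w,g\in L^1_{loc}(\mathbb{R}^N)$ positive a.e. Let $M$ be a constant with $M>0$ if $p=2$ and $0<M<\frac{4}{(p-1)^2}$ if $p>2$. Let $u\in C^1(\mathbb{R}^N)$ with $0<u\le M$ in $\mathbb{R}^N$ be a stable weak solution of $\operatorname{div}(w|\nabla u|^{p-2}\nabla u)=g(x)e^{1/u}$ in $\mathbb{R}^N$. Then for every $\beta\in(0,t_p)$ there is a constant $c>0$ (independent of $\psi$) such that for every nonnegative $\psi\in C^1_c(\mathbb{R}^N)$, $$\int_{\mathbb{R}^N} g\,u^{-2\beta-p}\psi^p\,dx\le c\int_{\mathbb{R}^N} w\,u^{-2\beta}|\nabla\psi|^p\,dx.$$
   Context: Weak solution and stability are with respect to $f(t)=-e^{1/t}$ and the equation $-\operatorname{div}(w|\nabla u|^{p-2}\nabla u)=gf(u)$: $u\in C^1$ is a weak solution if $\int w|\nabla u|^{p-2}\nabla u\cdot\nabla\varphi=\int gf(u)\varphi$ for all $\varphi\in C^1_c(\mathbb{R}^N)$; it is stable if for all $\varphi\in C^1_c(\mathbb{R}^N)$, $\int w|\nabla u|^{p-2}|\nabla\varphi|^2+(p-2)\int w|\nabla u|^{p-4}(\nabla u\cdot\nabla\varphi)^2-\int gf'(u)\varphi^2\ge0$ (middle integrand $=0$ where $\nabla u=0$). $t_p=\frac1M+\sqrt{\frac1M+\frac1{M^2}}$ if $p=2$, and $t_p=\frac{2}{M(p-1)}-\frac{p-1}{2}$ if $p>2$. *)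

theory Defs
  imports "HOL-Analysis.Analysis"
begin

text \<open>Power with the convention t^0 = 1 also at t = 0 (Isabelle's powr has 0 powr 0 = 0).\<close>
definition pw :: "real \<Rightarrow> real \<Rightarrow> real" where
  "pw t a = (if a = 0 then 1 else t powr a)"

definition C1_grad :: "(real^'n \<Rightarrow> real) \<Rightarrow> (real^'n \<Rightarrow> real^'n) \<Rightarrow> bool" where
  "C1_grad u Du \<longleftrightarrow> (\<forall>x. (u has_derivative (\<lambda>h. Du x \<bullet> h)) (at x)) \<and> continuous_on UNIV Du"

definition C1c_grad :: "(real^'n \<Rightarrow> real) \<Rightarrow> (real^'n \<Rightarrow> real^'n) \<Rightarrow> bool" where
  "C1c_grad phi Dphi \<longleftrightarrow> C1_grad phi Dphi \<and> compact (closure {x. phi x \<noteq> 0})"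

definition loc_integrable :: "(real^'n \<Rightarrow> real) \<Rightarrow> bool" where
  "loc_integrable w \<longleftrightarrow> (\<forall>K. compact K \<longrightarrow> set_integrable lebesgue K w)"

definition fE :: "real \<Rightarrow> real" where "fE t = - exp (1 / t)"
definition fE' :: "real \<Rightarrow> real" where "fE' t = exp (1 / t) / t\<^sup>2"

definition weak_solution ::
  "real \<Rightarrow> (real^'n \<Rightarrow> real) \<Rightarrow> (real^'n \<Rightarrow> real) \<Rightarrow> (real^'n \<Rightarrow> real) \<Rightarrow> (real^'n \<Rightarrow> real^'n) \<Rightarrow> bool" where
  "weak_solution p w g u Du \<longleftrightarrow>
     (\<forall>phi Dphi. C1c_grad phi Dphi \<longrightarrow>
        (\<integral>x. w x * pw (norm (Du x)) (p - 2) * (Du x \<bullet> Dphi x) \<partial>lebesgue)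
        = (\<integral>x. g x * fE (u x) * phi x \<partial>lebesgue))"

definition stable ::
  "real \<Rightarrow> (real^'n \<Rightarrow> real) \<Rightarrow> (real^'n \<Rightarrow> real) \<Rightarrow> (real^'n \<Rightarrow> real) \<Rightarrow> (real^'n \<Rightarrow> real^'n) \<Rightarrow> bool" where
  "stable p w g u Du \<longleftrightarrow>
     (\<forall>phi Dphi. C1c_grad phi Dphi \<longrightarrow>
        (\<integral>x. w x * pw (norm (Du x)) (p - 2) * (norm (Dphi x))\<^sup>2 \<partial>lebesgue)
        + (p - 2) * (\<integral>x. (if Du x = 0 then 0
                            else w x * norm (Du x) powr (p - 4) * (Du x \<bullet> Dphi x)\<^sup>2) \<partial>lebesgue)
        - (\<integral>x. g x * fE' (u x) * (phi x)\<^sup>2 \<partial>lebesgue) \<ge> 0)"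

definition t_p :: "real \<Rightarrow> real \<Rightarrow> real" where
  "t_p M p = (if p = 2 then 1 / M + sqrt (1 / M + 1 / M\<^sup>2)
              else 2 / (M * (p - 1)) - (p - 1) / 2)"

end

theory Submission
  imports Defs
begin

text \<open>Let \<open>\<theta> = \<psi>\<^bsup>p/2\<^esup>\<close> and \<open>a = -2\<beta> - p\<close>. Testing the equation with \<open>u\<^bsup>a+1\<^esup>\<theta>\<^sup>2\<close> and the
  stability inequality with \<open>u\<^bsup>(a+2)/2\<^esup>\<theta>\<close> gives two relations between
  \<open>A = \<integral> w |\<nabla>u|\<^sup>p u\<^sup>a \<theta>\<^sup>2\<close>, a cross term \<open>B\<close>, a term \<open>C'\<close> carrying \<open>|\<nabla>\<theta>|\<^sup>2\<close> and the source
  integral \<open>E = \<integral> g e\<^bsup>1/u\<^esup> u\<^sup>a \<theta>\<^sup>2\<close>. As \<open>u \<le> M\<close>, the source integral of the first relation is at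
  most \<open>M E\<close>; eliminating \<open>E\<close> leaves \<open>\<delta> A \<le> (2 + 2L\<gamma>) B + L C'\<close> with \<open>L = M (p - 1)\<close>,
  \<open>\<gamma> = (a + 2)/2\<close> and \<open>\<delta> = -(a + 1) - L \<gamma>\<^sup>2\<close>, and \<open>\<beta> < t_p\<close> is what makes \<open>\<delta>\<close> positive.
  Young's inequality bounds \<open>B\<close> and \<open>C'\<close> by \<open>\<eta> A\<close> plus multiples of \<open>\<integral> w u\<^bsup>-2\<beta>\<^esup> |\<nabla>\<psi>|\<^sup>p\<close>;
  absorbing \<open>A\<close> and returning to the stability relation bounds \<open>E\<close>, which dominates the left-hand
  side because \<open>e\<^bsup>1/u\<^esup> \<ge> 1\<close>.\<close>

section \<open>Continuously differentiable test functions\<close>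

lemma has_derivative_zero_if_dominated:
  fixes f g :: "'a::real_normed_vector \<Rightarrow> real"
  assumes g: "(g has_derivative (\<lambda>h. 0)) (at x)" "g x = 0" and "f x = 0"
    and dominated: "eventually (\<lambda>y. \<bar>f y\<bar> \<le> g y) (at x)"
  shows "(f has_derivative (\<lambda>h. 0)) (at x)"
proof -
  have "((\<lambda>y. ((g y - g x) - 0) /\<^sub>R norm (y - x)) \<longlongrightarrow> 0) (at x)"
    using g(1) by (simp add: has_derivative_at_within[where s=UNIV])
  then have "((\<lambda>y. g y / norm (y - x)) \<longlongrightarrow> 0) (at x)"
    using g(2) by (simp add: divide_inverse_commute)
  then have "((\<lambda>y. ((f y - f x) - 0) /\<^sub>R norm (y - x)) \<longlongrightarrow> 0) (at x)"
  proof (rule Lim_null_comparison[rotated])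
    show "\<forall>\<^sub>F y in at x. norm (((f y - f x) - 0) /\<^sub>R norm (y - x)) \<le> g y / norm (y - x)"
      using dominated by eventually_elim
        (simp add: \<open>f x = 0\<close> abs_mult divide_inverse_commute[symmetric] divide_right_mono)
  qed
  then show ?thesis
    by (simp add: has_derivative_at_within[where s=UNIV])
qed

lemma C1_grad_continuous: "C1_grad u Du \<Longrightarrow> continuous_on UNIV u"
  unfolding C1_grad_def by (meson has_derivative_at_withinI has_derivative_continuous_on)

lemma C1_grad_min_imp_gradient_zero:
  assumes "C1_grad \<psi> D\<psi>" "\<And>x. \<psi> x \<ge> 0" "\<psi> x = 0"
  shows "D\<psi> x = 0"
proof -
  have "(\<psi> has_derivative (\<lambda>h. D\<psi> x \<bullet> h)) (at x)"
    using assms(1) by (simp add: C1_grad_def)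
  then have "(\<lambda>h. D\<psi> x \<bullet> h) = (\<lambda>h. 0)"
    by (rule has_derivative_local_min) (use assms in auto)
  then show ?thesis
    by (metis inner_eq_zero_iff)
qed

lemma C1_grad_mult:
  assumes "C1_grad f Df" "C1_grad g Dg"
  shows "C1_grad (\<lambda>x. f x * g x) (\<lambda>x. f x *\<^sub>R Dg x + g x *\<^sub>R Df x)"
  unfolding C1_grad_def
proof (intro conjI allI)
  fix x
  have "(f has_derivative (\<lambda>h. Df x \<bullet> h)) (at x)" "(g has_derivative (\<lambda>h. Dg x \<bullet> h)) (at x)"
    using assms by (auto simp: C1_grad_def)
  from has_derivative_mult[OF this]
  show "((\<lambda>x. f x * g x) has_derivative (\<lambda>h. (f x *\<^sub>R Dg x + g x *\<^sub>R Df x) \<bullet> h)) (at x)"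
    by (simp add: inner_add_left algebra_simps)
next
  show "continuous_on UNIV (\<lambda>x. f x *\<^sub>R Dg x + g x *\<^sub>R Df x)"
    using assms C1_grad_continuous by (intro continuous_intros) (auto simp: C1_grad_def)
qed

lemma has_derivative_powr_const:
  fixes f :: "'a::real_inner \<Rightarrow> real"
  assumes "(f has_derivative (\<lambda>h. v \<bullet> h)) (at x)" "f x > 0"
  shows "((\<lambda>x. f x powr a) has_derivative (\<lambda>h. ((a * f x powr (a - 1)) *\<^sub>R v) \<bullet> h)) (at x)"
proof -
  have "((\<lambda>x. f x powr (\<lambda>_. a) x) has_derivative
      (\<lambda>h. f x powr a * (0 * ln (f x) + (v \<bullet> h) * a / f x))) (at x)"
    by (rule has_derivative_powr[OF assms(1) has_derivative_const]) (use assms in auto)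
  moreover have "(\<lambda>h. f x powr a * (0 * ln (f x) + (v \<bullet> h) * a / f x))
      = (\<lambda>h. ((a * f x powr (a - 1)) *\<^sub>R v) \<bullet> h)"
    using assms(2) by (auto simp: powr_diff field_simps)
  ultimately show ?thesis
    by simp
qed

lemma C1_grad_powr:
  assumes "C1_grad u Du" "\<And>x. u x > 0"
  shows "C1_grad (\<lambda>x. u x powr a) (\<lambda>x. (a * u x powr (a - 1)) *\<^sub>R Du x)"
  unfolding C1_grad_def
proof (intro conjI allI)
  fix x
  show "((\<lambda>x. u x powr a) has_derivative (\<lambda>h. ((a * u x powr (a - 1)) *\<^sub>R Du x) \<bullet> h)) (at x)"
    using assms by (intro has_derivative_powr_const) (auto simp: C1_grad_def)
next
  have "u x \<noteq> 0" for x
    using assms(2)[of x] by simp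
  then show "continuous_on UNIV (\<lambda>x. (a * u x powr (a - 1)) *\<^sub>R Du x)"
    using assms C1_grad_continuous[OF assms(1)] by (intro continuous_intros) (auto simp: C1_grad_def)
qed

text \<open>Near a zero of \<open>\<psi> \<ge> 0\<close> we have \<open>\<psi> powr q \<le> \<psi>\<close>, so the zero derivative of \<open>\<psi>\<close>
  is inherited.\<close>

lemma has_derivative_powr_at_zero:
  fixes \<psi> :: "'a::real_normed_vector \<Rightarrow> real"
  assumes d: "(\<psi> has_derivative (\<lambda>h. 0)) (at x)" and "\<psi> x = 0"
    and nonneg: "\<And>y. \<psi> y \<ge> 0" and q: "q > 1"
  shows "((\<lambda>y. \<psi> y powr q) has_derivative (\<lambda>h. 0)) (at x)"
proof (rule has_derivative_zero_if_dominated[OF d \<open>\<psi> x = 0\<close>])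
  have "(\<psi> \<longlongrightarrow> \<psi> x) (at x)"
    using has_derivative_continuous[OF d] by (simp add: continuous_at)
  then have "eventually (\<lambda>y. \<psi> y < 1) (at x)"
    using \<open>\<psi> x = 0\<close> by (intro order_tendstoD(2)) auto
  then show "eventually (\<lambda>y. \<bar>\<psi> y powr q\<bar> \<le> \<psi> y) (at x)"
  proof eventually_elim
    case (elim y)
    show ?case
    proof (cases "\<psi> y = 0")
      case False
      then have "\<psi> y powr q = \<psi> y * \<psi> y powr (q - 1)"
        using nonneg[of y] by (simp add: powr_diff)
      moreover have "\<psi> y powr (q - 1) \<le> 1"
        using elim nonneg[of y] q by (intro powr_le1) auto
      ultimately show ?thesis
        using nonneg[of y] by (simp add: mult_left_le)
    qed simp
  qed
qed (simp add: \<open>\<psi> x = 0\<close>)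

lemma C1_grad_powr_nonneg:
  assumes C: "C1_grad \<psi> D\<psi>" and nonneg: "\<And>x. \<psi> x \<ge> 0" and "q \<ge> 1"
  shows "C1_grad (\<lambda>x. \<psi> x powr q) (\<lambda>x. (q * pw (\<psi> x) (q - 1)) *\<^sub>R D\<psi> x)"
proof (cases "q = 1")
  case True
  then show ?thesis
    using C nonneg by (simp add: pw_def)
next
  case False
  with \<open>q \<ge> 1\<close> have q: "q > 1"
    by simp
  have pw: "pw (\<psi> x) (q - 1) = \<psi> x powr (q - 1)" for x
    using q by (simp add: pw_def)
  show ?thesis
    unfolding C1_grad_def pw
  proof (intro conjI allI)
    fix x
    have d: "(\<psi> has_derivative (\<lambda>h. D\<psi> x \<bullet> h)) (at x)"
      using C by (simp add: C1_grad_def)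
    show "((\<lambda>x. \<psi> x powr q) has_derivative (\<lambda>h. ((q * \<psi> x powr (q - 1)) *\<^sub>R D\<psi> x) \<bullet> h)) (at x)"
    proof (cases "\<psi> x = 0")
      case True
      then have "D\<psi> x = 0"
        using C1_grad_min_imp_gradient_zero[OF C nonneg] by simp
      then show ?thesis
        using has_derivative_powr_at_zero[of \<psi> x q] d True nonneg q by simp
    next
      case False
      then have "\<psi> x > 0"
        using nonneg[of x] by simp
      with d show ?thesis
        by (rule has_derivative_powr_const)
    qed
  next
    show "continuous_on UNIV (\<lambda>x. (q * \<psi> x powr (q - 1)) *\<^sub>R D\<psi> x)"
      using C C1_grad_continuous[OF C] nonneg q
      by (intro continuous_intros continuous_on_powr') (auto simp: C1_grad_def)
  qed
qed

lemma C1c_grad_if_vanishing: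
  assumes "C1_grad f Df" "C1c_grad \<psi> D\<psi>" "\<And>x. \<psi> x = 0 \<Longrightarrow> f x = 0"
  shows "C1c_grad f Df"
proof -
  have "closure {x. f x \<noteq> 0} \<subseteq> closure {x. \<psi> x \<noteq> 0}"
    using assms(3) by (intro closure_mono) auto
  then have "closure {x. f x \<noteq> 0} = closure {x. \<psi> x \<noteq> 0} \<inter> closure {x. f x \<noteq> 0}"
    by blast
  moreover have "compact (closure {x. \<psi> x \<noteq> 0})"
    using assms(2) by (simp add: C1c_grad_def)
  ultimately have "compact (closure {x. f x \<noteq> 0})"
    by (metis closed_closure compact_Int_closed)
  then show ?thesis
    using assms(1) by (simp add: C1c_grad_def)
qed

lemma C1c_grad_powr_nonneg:
  assumes "C1c_grad \<psi> D\<psi>" "\<And>x. \<psi> x \<ge> 0" "q \<ge> 1"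
  shows "C1c_grad (\<lambda>x. \<psi> x powr q) (\<lambda>x. (q * pw (\<psi> x) (q - 1)) *\<^sub>R D\<psi> x)"
proof (rule C1c_grad_if_vanishing[OF C1_grad_powr_nonneg assms(1)])
  show "C1_grad \<psi> D\<psi>"
    using assms(1) by (simp add: C1c_grad_def)
qed (use assms in auto)

lemma C1c_grad_continuous:
  assumes "C1c_grad \<theta> D\<theta>"
  shows "continuous_on UNIV \<theta>" "continuous_on UNIV D\<theta>"
  using assms C1_grad_continuous by (auto simp: C1c_grad_def C1_grad_def)

lemma continuous_on_pw:
  assumes "continuous_on UNIV f" "\<And>x. f x \<ge> 0" "a \<ge> 0"
  shows "continuous_on UNIV (\<lambda>x. pw (f x) a)"
proof (cases "a = 0")
  case False
  then have "continuous_on UNIV (\<lambda>x. f x powr a)"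
    using assms by (intro continuous_on_powr' continuous_on_const) auto
  then show ?thesis
    using False by (simp add: pw_def)
qed (simp add: pw_def)

lemma integrable_times_test_function:
  fixes w f :: "real^'n \<Rightarrow> real"
  assumes w: "loc_integrable w" and \<theta>: "C1c_grad \<theta> D\<theta>"
    and f: "continuous_on UNIV f" "\<And>x. \<theta> x = 0 \<Longrightarrow> f x = 0"
  shows "integrable lebesgue (\<lambda>x. w x * f x)"
proof -
  define K where "K = closure {x. \<theta> x \<noteq> 0}"
  have "compact K"
    using \<theta> by (simp add: C1c_grad_def K_def)
  then have wK: "integrable lebesgue (\<lambda>x. indicator K x *\<^sub>R w x)"
    using w by (simp add: loc_integrable_def set_integrable_def)
  have "compact (f ` K)"
    using \<open>compact K\<close> f(1) by (meson compact_continuous_image continuous_on_subset subset_UNIV)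
  then obtain B where B: "\<And>x. x \<in> K \<Longrightarrow> \<bar>f x\<bar> \<le> B"
    by (metis bounded_iff compact_imp_bounded image_eqI real_norm_def)
  have "f x = 0" if "x \<notin> K" for x
    using that closure_subset[of "{x. \<theta> x \<noteq> 0}"] f(2) unfolding K_def by blast
  then have eq: "(\<lambda>x. w x * f x) = (\<lambda>x. (indicator K x *\<^sub>R w x) * f x)"
    by (auto simp: indicator_def fun_eq_iff)
  show ?thesis
    unfolding eq
  proof (rule Bochner_Integration.integrable_bound[OF integrable_mult_right[OF wK, of B]])
    show "(\<lambda>x. (indicator K x *\<^sub>R w x) * f x) \<in> borel_measurable lebesgue"
      using wK f(1) continuous_imp_measurable_on_sets_lebesgue[of UNIV f]
      by (intro borel_measurable_times) auto
    show "AE x in lebesgue. norm (indicator K x *\<^sub>R w x * f x) \<le> norm (B * (indicator K x *\<^sub>R w x))"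
    proof (intro AE_I2)
      fix x
      show "norm (indicator K x *\<^sub>R w x * f x) \<le> norm (B * (indicator K x *\<^sub>R w x))"
        using B[of x] by (cases "x \<in> K") (auto simp: abs_mult mult.commute[of "\<bar>w x\<bar>"] mult_right_mono)
    qed
  qed
qed

section \<open>Pointwise inequalities\<close>

lemma young_powr:
  fixes P Q p \<eta> :: real
  assumes "P \<ge> 0" "Q \<ge> 0" "p \<ge> 1" "\<eta> > 0"
  shows "P powr (p - 1) * Q \<le> \<eta> * P powr p + \<eta> powr (1 - p) * Q powr p"
proof (cases "Q \<le> \<eta> * P")
  case True
  have "P powr (p - 1) * Q \<le> P powr (p - 1) * (\<eta> * P)"
    using True assms by (intro mult_left_mono) auto
  also have "\<dots> = \<eta> * P powr p"
    using assms by (cases "P = 0") (auto simp: powr_diff)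
  also have "\<dots> \<le> \<eta> * P powr p + \<eta> powr (1 - p) * Q powr p"
    by simp
  finally show ?thesis .
next
  case False
  then have "P \<le> Q / \<eta>" "Q > 0"
    using assms by (auto simp: field_simps) (smt (verit) mult_nonneg_nonneg)
  then have "P powr (p - 1) * Q \<le> (Q / \<eta>) powr (p - 1) * Q"
    using assms by (intro mult_right_mono powr_mono2) auto
  also have "\<dots> = \<eta> powr (1 - p) * Q powr p"
    using assms \<open>Q > 0\<close> by (simp add: powr_divide powr_diff field_simps powr_minus_divide)
  also have "\<dots> \<le> \<eta> * P powr p + \<eta> powr (1 - p) * Q powr p"
    using assms by simp
  finally show ?thesis .
qed

lemma young_pw_square:
  fixes P Q p \<eta> :: real
  assumes "P \<ge> 0" "Q \<ge> 0" "p \<ge> 2" "\<eta> > 0"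
  shows "pw P (p - 2) * Q\<^sup>2 \<le> \<eta>\<^sup>2 * P powr p + \<eta> powr (2 - p) * Q powr p"
proof (cases "Q \<le> \<eta> * P")
  case True
  have "pw P (p - 2) * Q\<^sup>2 \<le> pw P (p - 2) * (\<eta> * P)\<^sup>2"
    using True assms by (intro mult_left_mono power_mono) (auto simp: pw_def)
  also have "\<dots> = \<eta>\<^sup>2 * P powr p"
    using assms by (cases "P = 0"; cases "p = 2")
      (auto simp: pw_def powr_diff power2_eq_square powr_numeral[symmetric])
  also have "\<dots> \<le> \<eta>\<^sup>2 * P powr p + \<eta> powr (2 - p) * Q powr p"
    by simp
  finally show ?thesis .
next
  case False
  then have "P \<le> Q / \<eta>" "Q > 0"
    using assms by (auto simp: field_simps) (smt (verit) mult_nonneg_nonneg)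
  then have "pw P (p - 2) * Q\<^sup>2 \<le> pw (Q / \<eta>) (p - 2) * Q\<^sup>2"
    using assms by (intro mult_right_mono) (auto simp: pw_def intro!: powr_mono2)
  also have "\<dots> = \<eta> powr (2 - p) * Q powr p"
    using assms \<open>Q > 0\<close> by (cases "p = 2")
      (auto simp: pw_def powr_divide powr_diff field_simps powr_minus_divide power2_eq_square
        powr_numeral[symmetric])
  also have "\<dots> \<le> \<eta>\<^sup>2 * P powr p + \<eta> powr (2 - p) * Q powr p"
    using assms by simp
  finally show ?thesis .
qed

lemma pw_pos: "x > 0 \<Longrightarrow> pw x a = x powr a"
  by (simp add: pw_def)

lemma power2_powr: "(x::real) > 0 \<Longrightarrow> (x powr a)\<^sup>2 = x powr (2 * a)"
  by (simp add: powr_powr[symmetric] mult.commute)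

text \<open>With \<open>P = s t U\<^bsup>e/p\<^esup>\<close> and \<open>Q = U\<^bsup>(e+p)/p\<^esup> r\<close>, where s, t, r, U stand for
  \<open>|\<nabla>u|\<close>, \<open>\<psi>\<close>, \<open>|\<nabla>\<psi>|\<close>, \<open>u\<close>, the energy densities built from \<open>\<theta> = \<psi>\<^bsup>p/2\<^esup>\<close> become
  \<open>P\<^sup>p\<close>, \<open>P\<^bsup>p-1\<^esup>Q\<close>, \<open>P\<^bsup>p-2\<^esup>Q\<^sup>2\<close> and \<open>Q\<^sup>p\<close>, ready for Young's inequality.\<close>

lemma grad_density_eq:
  fixes s t U p e :: real
  assumes "s \<ge> 0" "t \<ge> 0" "U > 0" "p \<ge> 2"
  shows "pw s (p - 2) * s\<^sup>2 * U powr e * (t powr (p / 2))\<^sup>2 = (s * t * U powr (e / p)) powr p"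
proof (cases "s = 0 \<or> t = 0")
  case False
  then have "s > 0" "t > 0"
    using assms by auto
  then have "(s * t * U powr (e / p)) powr p = s powr p * t powr p * U powr e"
    using assms by (simp add: powr_mult powr_powr)
  moreover have "pw s (p - 2) * s\<^sup>2 = s powr p"
    using \<open>s > 0\<close> powr_add[of s "p - 2" 2] by (simp add: pw_pos)
  moreover have "(t powr (p / 2))\<^sup>2 = t powr p"
    using \<open>t > 0\<close> by (simp add: power2_powr)
  ultimately show ?thesis
    by simp
qed (use assms in \<open>auto simp: pw_def\<close>)

lemma cross_density_eq:
  fixes s t U p e r :: real
  assumes "s \<ge> 0" "t \<ge> 0" "U > 0" "p \<ge> 2"
  shows "pw s (p - 2) * s * U powr (e + 1) * t powr (p / 2) * (p / 2 * pw t (p / 2 - 1) * r)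
       = p / 2 * ((s * t * U powr (e / p)) powr (p - 1) * (U powr ((e + p) / p) * r))"
proof (cases "s = 0 \<or> t = 0")
  case False
  then have "s > 0" "t > 0"
    using assms by auto
  have "e / p * (p - 1) + (e + p) / p = e + 1"
    using assms by (simp add: field_simps)
  then have "(s * t * U powr (e / p)) powr (p - 1) * U powr ((e + p) / p)
      = s powr (p - 1) * t powr (p - 1) * U powr (e + 1)"
    using \<open>s > 0\<close> \<open>t > 0\<close> assms by (simp add: powr_mult powr_powr mult.assoc flip: powr_add)
  moreover have "pw s (p - 2) * s = s powr (p - 1)"
    using \<open>s > 0\<close> powr_add[of s "p - 2" 1] by (simp add: pw_pos)
  moreover have "t powr (p / 2) * pw t (p / 2 - 1) = t powr (p - 1)"
    using \<open>t > 0\<close> powr_add[of t "p / 2" "p / 2 - 1"] by (simp add: pw_pos)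
  moreover have "pw s (p - 2) * s * U powr (e + 1) * t powr (p / 2) * (p / 2 * pw t (p / 2 - 1) * r)
      = p / 2 * ((pw s (p - 2) * s) * (t powr (p / 2) * pw t (p / 2 - 1)) * U powr (e + 1) * r)"
    by (simp add: ac_simps)
  ultimately show ?thesis
    by (simp add: ac_simps)
qed (use assms in \<open>auto simp: pw_def\<close>)

lemma test_density_eq:
  fixes s t U p e r :: real
  assumes "s \<ge> 0" "t \<ge> 0" "U > 0" "p \<ge> 2"
  shows "pw s (p - 2) * U powr (e + 2) * (p / 2 * pw t (p / 2 - 1) * r)\<^sup>2
       = (p / 2)\<^sup>2 * (pw (s * t * U powr (e / p)) (p - 2) * (U powr ((e + p) / p) * r)\<^sup>2)"
proof (cases "p = 2")
  case True
  have "(U powr ((e + 2) / 2))\<^sup>2 = U powr (2 * ((e + 2) / 2))"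
    using assms by (simp only: power2_powr)
  moreover have "2 * ((e + 2) / 2) = e + 2"
    by simp
  ultimately have "(U powr ((e + 2) / 2))\<^sup>2 = U powr (e + 2)"
    by metis
  then show ?thesis
    using True by (simp add: pw_def power_mult_distrib)
next
  case False
  show ?thesis
  proof (cases "s = 0 \<or> t = 0")
    case False
    then have "s > 0" "t > 0"
      using assms by auto
    have "e / p * (p - 2) + 2 * ((e + p) / p) = e + 2"
      using \<open>p \<noteq> 2\<close> assms by (simp add: field_simps)
    then have U: "U powr (e / p * (p - 2)) * (U powr ((e + p) / p))\<^sup>2 = U powr (e + 2)"
      using assms by (simp add: power2_powr flip: powr_add)
    have "pw (s * t * U powr (e / p)) (p - 2)
        = s powr (p - 2) * t powr (p - 2) * U powr (e / p * (p - 2))"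
      using \<open>s > 0\<close> \<open>t > 0\<close> assms by (simp add: pw_pos powr_mult powr_powr)
    moreover have "(pw t (p / 2 - 1))\<^sup>2 = t powr (p - 2)"
      using \<open>t > 0\<close> by (simp add: pw_pos power2_powr algebra_simps)
    moreover have "pw s (p - 2) * U powr (e + 2) * (p / 2 * pw t (p / 2 - 1) * r)\<^sup>2
        = (p / 2)\<^sup>2 * (pw s (p - 2) * (pw t (p / 2 - 1))\<^sup>2 * U powr (e + 2) * r\<^sup>2)"
      by (simp only: power_mult_distrib mult_ac)
    ultimately show ?thesis
      using \<open>s > 0\<close> by (simp add: pw_pos power_mult_distrib U[symmetric] ac_simps)
  qed (use assms \<open>p \<noteq> 2\<close> in \<open>auto simp: pw_def\<close>)
qed

lemma p_density_eq:
  fixes U p e r :: real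
  assumes "U > 0" "p \<ge> 2" "r \<ge> 0"
  shows "U powr (e + p) * r powr p = (U powr ((e + p) / p) * r) powr p"
  using assms by (simp add: powr_mult powr_powr)

lemma cross_density_young:
  fixes W s t r U p e \<eta> I :: real
  assumes "W \<ge> 0" "s \<ge> 0" "t \<ge> 0" "r \<ge> 0" "U > 0" "p \<ge> 2" "\<eta> > 0"
    and I: "\<bar>I\<bar> \<le> s * (p / 2 * pw t (p / 2 - 1) * r)"
  shows "\<bar>W * (pw s (p - 2) * U powr (e + 1) * t powr (p / 2) * I)\<bar>
    \<le> p / 2 * (\<eta> * (W * (pw s (p - 2) * s\<^sup>2 * U powr e * (t powr (p / 2))\<^sup>2))
      + \<eta> powr (1 - p) * (W * (U powr (e + p) * r powr p)))"
proof -
  define P where "P = s * t * U powr (e / p)"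
  define Q where "Q = U powr ((e + p) / p) * r"
  have "P \<ge> 0" "Q \<ge> 0"
    using assms by (auto simp: P_def Q_def)
  have pw_nonneg: "pw s (p - 2) \<ge> 0" "pw t (p / 2 - 1) \<ge> 0"
    by (auto simp: pw_def)
  have "\<bar>W * (pw s (p - 2) * U powr (e + 1) * t powr (p / 2) * I)\<bar>
      = W * (pw s (p - 2) * U powr (e + 1) * t powr (p / 2) * \<bar>I\<bar>)"
    using assms pw_nonneg by (simp add: abs_mult)
  also have "\<dots> \<le> W * (pw s (p - 2) * U powr (e + 1) * t powr (p / 2) * (s * (p / 2 * pw t (p / 2 - 1) * r)))"
    using assms pw_nonneg I by (intro mult_left_mono) auto
  also have "\<dots> = W * (p / 2 * (P powr (p - 1) * Q))"
    using cross_density_eq[of s t U p e r] assms by (simp add: P_def Q_def mult_ac)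
  also have "\<dots> \<le> W * (p / 2 * (\<eta> * P powr p + \<eta> powr (1 - p) * Q powr p))"
    using young_powr[of P Q p \<eta>] \<open>P \<ge> 0\<close> \<open>Q \<ge> 0\<close> assms by (intro mult_left_mono) auto
  also have "\<dots> = p / 2 * (\<eta> * (W * (pw s (p - 2) * s\<^sup>2 * U powr e * (t powr (p / 2))\<^sup>2))
      + \<eta> powr (1 - p) * (W * (U powr (e + p) * r powr p)))"
    using grad_density_eq[of s t U p e] p_density_eq[of U p r e] assms
    by (simp add: P_def Q_def algebra_simps)
  finally show ?thesis .
qed

lemma test_density_young:
  fixes W s t r U p e \<eta> :: real
  assumes "W \<ge> 0" "s \<ge> 0" "t \<ge> 0" "r \<ge> 0" "U > 0" "p \<ge> 2" "\<eta> > 0"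
  shows "W * (pw s (p - 2) * U powr (e + 2) * (p / 2 * pw t (p / 2 - 1) * r)\<^sup>2)
    \<le> (p / 2)\<^sup>2 * (\<eta>\<^sup>2 * (W * (pw s (p - 2) * s\<^sup>2 * U powr e * (t powr (p / 2))\<^sup>2))
      + \<eta> powr (2 - p) * (W * (U powr (e + p) * r powr p)))"
proof -
  define P where "P = s * t * U powr (e / p)"
  define Q where "Q = U powr ((e + p) / p) * r"
  have "P \<ge> 0" "Q \<ge> 0"
    using assms by (auto simp: P_def Q_def)
  have "W * (pw s (p - 2) * U powr (e + 2) * (p / 2 * pw t (p / 2 - 1) * r)\<^sup>2)
      = W * ((p / 2)\<^sup>2 * (pw P (p - 2) * Q\<^sup>2))"
    using test_density_eq[of s t U p e r] assms by (simp add: P_def Q_def)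
  also have "\<dots> \<le> W * ((p / 2)\<^sup>2 * (\<eta>\<^sup>2 * P powr p + \<eta> powr (2 - p) * Q powr p))"
    using young_pw_square[OF \<open>P \<ge> 0\<close> \<open>Q \<ge> 0\<close> \<open>p \<ge> 2\<close> \<open>\<eta> > 0\<close>] assms
    by (intro mult_left_mono) auto
  also have "\<dots> = (p / 2)\<^sup>2 * (\<eta>\<^sup>2 * (W * (pw s (p - 2) * s\<^sup>2 * U powr e * (t powr (p / 2))\<^sup>2))
      + \<eta> powr (2 - p) * (W * (U powr (e + p) * r powr p)))"
    using grad_density_eq[of s t U p e] p_density_eq[of U p r e] assms
    by (simp add: P_def Q_def algebra_simps)
  finally show ?thesis .
qed

lemma power2_norm_scaleR_add:
  fixes v z :: "'a::real_inner"
  shows "(norm (a *\<^sub>R v + b *\<^sub>R z))\<^sup>2 = a\<^sup>2 * (norm v)\<^sup>2 + 2 * a * b * (v \<bullet> z) + b\<^sup>2 * (norm z)\<^sup>2"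
  unfolding power2_norm_eq_inner
  by (simp add: inner_add_left inner_add_right inner_commute algebra_simps power2_eq_square)

lemma power2_norm_gradient_powr_mult:
  fixes v z :: "'a::real_inner" and U t \<gamma> a :: real
  assumes "\<gamma> = (a + 2) / 2"
  shows "(norm (U powr \<gamma> *\<^sub>R z + t *\<^sub>R ((\<gamma> * U powr (\<gamma> - 1)) *\<^sub>R v)))\<^sup>2
    = U powr (a + 2) * (norm z)\<^sup>2 + 2 * \<gamma> * t * U powr (a + 1) * (v \<bullet> z) + \<gamma>\<^sup>2 * t\<^sup>2 * U powr a * (norm v)\<^sup>2"
proof -
  have "\<gamma> + \<gamma> = a + 2" "\<gamma> + (\<gamma> - 1) = a + 1" "(\<gamma> - 1) + (\<gamma> - 1) = a"
    using assms by (simp_all add: field_simps)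
  then have powers: "U powr \<gamma> * U powr \<gamma> = U powr (a + 2)" "U powr \<gamma> * U powr (\<gamma> - 1) = U powr (a + 1)"
      "U powr (\<gamma> - 1) * U powr (\<gamma> - 1) = U powr a"
    by (simp_all only: powr_add[symmetric])
  have "(U powr \<gamma>)\<^sup>2 = U powr (a + 2)"
    by (simp only: power2_eq_square powers)
  moreover have "2 * U powr \<gamma> * (t * (\<gamma> * U powr (\<gamma> - 1))) = 2 * \<gamma> * t * U powr (a + 1)"
    by (simp only: powers(2)[symmetric] mult_ac)
  moreover have "(t * (\<gamma> * U powr (\<gamma> - 1)))\<^sup>2 = \<gamma>\<^sup>2 * t\<^sup>2 * U powr a"
    by (simp only: powers(3)[symmetric] power2_eq_square mult_ac)
  ultimately show ?thesis
    using power2_norm_scaleR_add[of "U powr \<gamma>" z "t * (\<gamma> * U powr (\<gamma> - 1))" v]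
    by (simp add: inner_commute)
qed

lemma fE'_mult_power2:
  fixes U t \<gamma> a :: real
  assumes "U > 0" "\<gamma> + \<gamma> = a + 2"
  shows "fE' U * (U powr \<gamma> * t)\<^sup>2 = exp (1 / U) * U powr a * t\<^sup>2"
proof -
  have "(U powr \<gamma> * t)\<^sup>2 = U powr a * U\<^sup>2 * t\<^sup>2"
    using assms powr_add[of U \<gamma> \<gamma>] powr_add[of U a 2] by (simp add: power2_eq_square)
  then show ?thesis
    using assms(1) by (simp add: fE'_def field_simps)
qed

lemma exists_small_parameter:
  fixes k l \<delta> :: real
  assumes "k \<ge> 0" "l \<ge> 0" "\<delta> > 0"
  obtains \<eta> where "\<eta> > 0" "k * \<eta> + l * \<eta>\<^sup>2 \<le> \<delta>"
proof
  define \<eta> where "\<eta> = min 1 (\<delta> / (k + l + 1))"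
  show "\<eta> > 0"
    using assms by (simp add: \<eta>_def)
  have "\<eta> \<le> 1"
    by (simp add: \<eta>_def)
  then have "\<eta>\<^sup>2 \<le> \<eta>"
    using \<open>\<eta> > 0\<close> by (simp add: power2_eq_square mult_le_cancel_left1)
  then have "k * \<eta> + l * \<eta>\<^sup>2 \<le> (k + l + 1) * \<eta>"
    using assms \<open>\<eta> > 0\<close> mult_left_mono[of "\<eta>\<^sup>2" \<eta> l] by (simp add: algebra_simps)
  also have "\<dots> \<le> (k + l + 1) * (\<delta> / (k + l + 1))"
    using assms by (intro mult_left_mono) (auto simp: \<eta>_def)
  finally show "k * \<eta> + l * \<eta>\<^sup>2 \<le> \<delta>"
    using assms by simp
qed

lemma below_quadratic_root:
  fixes M \<beta> :: real
  assumes M: "M > 0" and \<beta>: "0 < \<beta>" "\<beta> < 1 / M + sqrt (1 / M + 1 / M\<^sup>2)"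
  shows "M * \<beta>\<^sup>2 < 2 * \<beta> + 1"
proof -
  define c where "c = 1 / M"
  have Mc: "M * c = 1" "c > 0"
    using M by (auto simp: c_def)
  show ?thesis
  proof (cases "\<beta> < c")
    case True
    then have "M * \<beta>\<^sup>2 < M * (\<beta> * c)"
      using M \<beta> by (simp add: power2_eq_square)
    also have "\<dots> = \<beta>"
      using Mc by (simp add: algebra_simps)
    finally show ?thesis
      using \<beta> by simp
  next
    case False
    then have "(\<beta> - c)\<^sup>2 < (sqrt (c + c\<^sup>2))\<^sup>2"
      using \<beta> by (intro power_strict_mono) (auto simp: c_def power2_eq_square)
    then have "(\<beta> - c)\<^sup>2 < c + c\<^sup>2"
      using Mc by simp
    moreover have "M * \<beta>\<^sup>2 - 2 * \<beta> - 1 = M * ((\<beta> - c)\<^sup>2 - c - c\<^sup>2)"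
      using Mc by (simp add: power2_eq_square algebra_simps)
    ultimately show ?thesis
      using M by (smt (verit) mult_pos_neg)
  qed
qed

lemma t_p_coercive:
  fixes p M \<beta> :: real
  assumes p: "p \<ge> 2" and M: "M > 0" and \<beta>: "0 < \<beta>" "\<beta> < t_p M p"
  shows "M * (p - 1) * (\<beta> + (p - 2) / 2)\<^sup>2 < 2 * \<beta> + p - 1"
proof (cases "p = 2")
  case True
  have "M * \<beta>\<^sup>2 < 2 * \<beta> + 1"
    using \<beta> True by (intro below_quadratic_root[OF M]) (auto simp: t_p_def)
  then show ?thesis
    using True by simp
next
  case False
  then have "p > 2"
    using p by simp
  define L where "L = M * (p - 1)"
  define s where "s = \<beta> + (p - 1) / 2"
  have "L > 0"
    using M \<open>p > 2\<close> by (simp add: L_def)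
  have "s < 2 / L"
    using \<beta> False by (simp add: t_p_def L_def s_def)
  then have "L * s < 2"
    using \<open>L > 0\<close> by (simp add: pos_less_divide_eq mult.commute)
  have "0 < s - 1 / 2"
    using \<beta> \<open>p > 2\<close> by (simp add: s_def field_simps)
  then have "L * (s - 1 / 2)\<^sup>2 < L * s\<^sup>2"
    using \<open>L > 0\<close> by (intro mult_strict_left_mono power_strict_mono) auto
  also have "\<dots> = (L * s) * s"
    by (simp add: power2_eq_square)
  also have "\<dots> < 2 * s"
    using \<open>L * s < 2\<close> \<open>0 < s - 1 / 2\<close> by (intro mult_strict_right_mono) auto
  finally have "L * (s - 1 / 2)\<^sup>2 < 2 * s" .
  moreover have "s - 1 / 2 = \<beta> + (p - 2) / 2" "2 * s = 2 * \<beta> + p - 1"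
    by (simp_all add: s_def field_simps)
  ultimately show ?thesis
    by (simp add: L_def)
qed

section \<open>Absorption\<close>

lemma source_elimination:
  fixes a M p \<gamma> A B C' E1 E2 :: real
  assumes weak: "(a + 1) * A + 2 * B = - E1" and shift: "E1 \<le> M * E2" and "M \<ge> 0"
    and stab: "E2 \<le> (p - 1) * (\<gamma>\<^sup>2 * A + 2 * \<gamma> * B + C')"
  shows "(- (a + 1) - M * (p - 1) * \<gamma>\<^sup>2) * A \<le> (2 + 2 * M * (p - 1) * \<gamma>) * B + M * (p - 1) * C'"
proof -
  have "- (a + 1) * A \<le> M * E2 + 2 * B"
    using weak shift by (simp add: algebra_simps)
  also have "\<dots> \<le> M * ((p - 1) * (\<gamma>\<^sup>2 * A + 2 * \<gamma> * B + C')) + 2 * B"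
    using mult_left_mono[OF stab \<open>M \<ge> 0\<close>] by simp
  finally show ?thesis
    by (simp add: algebra_simps)
qed

lemma young_absorption:
  fixes \<delta> k L q p :: real
  assumes "\<delta> > 0" "L \<ge> 0" "q \<ge> 0"
  obtains KA where "KA \<ge> 0"
    and "\<And>A B C' C. A \<ge> 0 \<Longrightarrow> C \<ge> 0 \<Longrightarrow> \<delta> * A \<le> k * B + L * C' \<Longrightarrow>
      (\<And>\<eta>. \<eta> > 0 \<Longrightarrow> \<bar>B\<bar> \<le> q * (\<eta> * A + \<eta> powr (1 - p) * C)) \<Longrightarrow>
      (\<And>\<eta>. \<eta> > 0 \<Longrightarrow> C' \<le> q\<^sup>2 * (\<eta>\<^sup>2 * A + \<eta> powr (2 - p) * C)) \<Longrightarrow> A \<le> KA * C"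
proof -
  obtain \<eta> where \<eta>: "\<eta> > 0" "\<bar>k\<bar> * q * \<eta> + L * q\<^sup>2 * \<eta>\<^sup>2 \<le> \<delta> / 2"
    using exists_small_parameter[of "\<bar>k\<bar> * q" "L * q\<^sup>2" "\<delta> / 2"] assms by (auto simp: mult.assoc)
  define K0 where "K0 = \<bar>k\<bar> * q * \<eta> powr (1 - p) + L * q\<^sup>2 * \<eta> powr (2 - p)"
  show thesis
  proof (rule that[of "2 * K0 / \<delta>"])
    show "2 * K0 / \<delta> \<ge> 0"
      using assms by (simp add: K0_def)
    fix A B C' C :: real
    assume "A \<ge> 0" "C \<ge> 0" and combined: "\<delta> * A \<le> k * B + L * C'"
      and cross: "\<And>\<eta>. \<eta> > 0 \<Longrightarrow> \<bar>B\<bar> \<le> q * (\<eta> * A + \<eta> powr (1 - p) * C)"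
      and test: "\<And>\<eta>. \<eta> > 0 \<Longrightarrow> C' \<le> q\<^sup>2 * (\<eta>\<^sup>2 * A + \<eta> powr (2 - p) * C)"
    have "k * B \<le> \<bar>k\<bar> * \<bar>B\<bar>"
      by (simp add: abs_mult[symmetric])
    moreover have "\<bar>k\<bar> * \<bar>B\<bar> \<le> \<bar>k\<bar> * (q * (\<eta> * A + \<eta> powr (1 - p) * C))"
      using cross[OF \<eta>(1)] by (rule mult_left_mono) simp
    moreover have "L * C' \<le> L * (q\<^sup>2 * (\<eta>\<^sup>2 * A + \<eta> powr (2 - p) * C))"
      using test[OF \<eta>(1)] \<open>L \<ge> 0\<close> by (rule mult_left_mono)
    ultimately have "\<delta> * A \<le> \<bar>k\<bar> * (q * (\<eta> * A + \<eta> powr (1 - p) * C)) + L * (q\<^sup>2 * (\<eta>\<^sup>2 * A + \<eta> powr (2 - p) * C))"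
      using combined by linarith
    also have "\<dots> = (\<bar>k\<bar> * q * \<eta> + L * q\<^sup>2 * \<eta>\<^sup>2) * A + K0 * C"
      by (simp add: K0_def algebra_simps)
    also have "\<dots> \<le> \<delta> / 2 * A + K0 * C"
      using mult_right_mono[OF \<eta>(2) \<open>A \<ge> 0\<close>] by simp
    finally show "A \<le> 2 * K0 / \<delta> * C"
      using \<open>\<delta> > 0\<close> by (simp add: field_simps)
  qed
qed

lemma absorption:
  fixes p M a :: real
  assumes p: "p \<ge> 2" and M: "M > 0"
    and coercive: "M * (p - 1) * ((a + 2) / 2)\<^sup>2 < - (a + 1)"
  obtains K where "K > 0"
    and "\<And>A B C' C E1 E2. A \<ge> 0 \<Longrightarrow> C \<ge> 0 \<Longrightarrow>
      (a + 1) * A + 2 * B = - E1 \<Longrightarrow> E1 \<le> M * E2 \<Longrightarrow>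
      E2 \<le> (p - 1) * (((a + 2) / 2)\<^sup>2 * A + (a + 2) * B + C') \<Longrightarrow>
      (\<And>\<eta>. \<eta> > 0 \<Longrightarrow> \<bar>B\<bar> \<le> p / 2 * (\<eta> * A + \<eta> powr (1 - p) * C)) \<Longrightarrow>
      (\<And>\<eta>. \<eta> > 0 \<Longrightarrow> C' \<le> (p / 2)\<^sup>2 * (\<eta>\<^sup>2 * A + \<eta> powr (2 - p) * C)) \<Longrightarrow>
      E2 \<le> K * C"
proof -
  define \<gamma> where "\<gamma> = (a + 2) / 2"
  define q where "q = p / 2"
  have "a + 2 = 2 * \<gamma>" "q \<ge> 0" "M * (p - 1) \<ge> 0"
    using p M by (simp_all add: \<gamma>_def q_def)
  have "- (a + 1) - M * (p - 1) * \<gamma>\<^sup>2 > 0"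
    using coercive by (simp add: \<gamma>_def)
  from young_absorption[OF this \<open>M * (p - 1) \<ge> 0\<close> \<open>q \<ge> 0\<close>, where k = "2 + 2 * M * (p - 1) * \<gamma>" and p = p]
  obtain KA where "KA \<ge> 0" and absorbed: "\<And>A B C' C. A \<ge> 0 \<Longrightarrow> C \<ge> 0 \<Longrightarrow>
      (- (a + 1) - M * (p - 1) * \<gamma>\<^sup>2) * A \<le> (2 + 2 * M * (p - 1) * \<gamma>) * B + M * (p - 1) * C' \<Longrightarrow>
      (\<And>\<eta>. \<eta> > 0 \<Longrightarrow> \<bar>B\<bar> \<le> q * (\<eta> * A + \<eta> powr (1 - p) * C)) \<Longrightarrow>
      (\<And>\<eta>. \<eta> > 0 \<Longrightarrow> C' \<le> q\<^sup>2 * (\<eta>\<^sup>2 * A + \<eta> powr (2 - p) * C)) \<Longrightarrow> A \<le> KA * C"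
    by blast
  define S where "S = (p - 1) * (\<gamma>\<^sup>2 + 2 * \<bar>\<gamma>\<bar> * q + q\<^sup>2)"
  have "S \<ge> 0"
    using p \<open>q \<ge> 0\<close> by (simp add: S_def)
  show thesis
  proof (rule that[of "max (S * (KA + 1)) 1"])
    fix A B C' C E1 E2 :: real
    assume "A \<ge> 0" "C \<ge> 0" and weak: "(a + 1) * A + 2 * B = - E1" and shift: "E1 \<le> M * E2"
      and stab: "E2 \<le> (p - 1) * (((a + 2) / 2)\<^sup>2 * A + (a + 2) * B + C')"
      and cross: "\<And>\<eta>. \<eta> > 0 \<Longrightarrow> \<bar>B\<bar> \<le> p / 2 * (\<eta> * A + \<eta> powr (1 - p) * C)"
      and test: "\<And>\<eta>. \<eta> > 0 \<Longrightarrow> C' \<le> (p / 2)\<^sup>2 * (\<eta>\<^sup>2 * A + \<eta> powr (2 - p) * C)"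
    have stab': "E2 \<le> (p - 1) * (\<gamma>\<^sup>2 * A + 2 * \<gamma> * B + C')"
      using stab \<open>a + 2 = 2 * \<gamma>\<close> by simp
    have "A \<le> KA * C"
    proof (rule absorbed[OF \<open>A \<ge> 0\<close> \<open>C \<ge> 0\<close>])
      show "(- (a + 1) - M * (p - 1) * \<gamma>\<^sup>2) * A \<le> (2 + 2 * M * (p - 1) * \<gamma>) * B + M * (p - 1) * C'"
        using source_elimination[OF weak shift _ stab'] M by simp
      show "\<bar>B\<bar> \<le> q * (\<eta> * A + \<eta> powr (1 - p) * C)" if "\<eta> > 0" for \<eta>
        using cross[OF that] by (simp add: q_def)
      show "C' \<le> q\<^sup>2 * (\<eta>\<^sup>2 * A + \<eta> powr (2 - p) * C)" if "\<eta> > 0" for \<eta>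
        using test[OF that] by (simp add: q_def)
    qed
    have "\<bar>B\<bar> \<le> q * (A + C)" "C' \<le> q\<^sup>2 * (A + C)"
      using cross[of 1] test[of 1] by (simp_all add: q_def)
    moreover have "2 * \<gamma> * B \<le> 2 * \<bar>\<gamma>\<bar> * \<bar>B\<bar>"
      by (simp add: abs_mult[symmetric])
    moreover have "\<gamma>\<^sup>2 * A \<le> \<gamma>\<^sup>2 * (A + C)"
      using \<open>C \<ge> 0\<close> by (simp add: mult_left_mono)
    ultimately have "\<gamma>\<^sup>2 * A + 2 * \<gamma> * B + C' \<le> (\<gamma>\<^sup>2 + 2 * \<bar>\<gamma>\<bar> * q + q\<^sup>2) * (A + C)"
      using mult_left_mono[of "\<bar>B\<bar>" "q * (A + C)" "2 * \<bar>\<gamma>\<bar>"] by (simp add: algebra_simps)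
    then have "E2 \<le> S * (A + C)"
      using stab' p unfolding S_def by (smt (verit) mult_left_mono mult.assoc)
    also have "\<dots> \<le> S * ((KA + 1) * C)"
      using \<open>A \<le> KA * C\<close> \<open>S \<ge> 0\<close> by (intro mult_left_mono) (simp_all add: algebra_simps)
    also have "\<dots> \<le> max (S * (KA + 1)) 1 * C"
      using \<open>C \<ge> 0\<close> by (simp add: mult.assoc[symmetric] mult_right_mono)
    finally show "E2 \<le> max (S * (KA + 1)) 1 * C" .
  qed simp
qed

section \<open>Testing a stable weak solution\<close>

lemma inner_square_powr_le:
  fixes v z :: "'a::real_inner"
  assumes "v \<noteq> 0"
  shows "norm v powr (p - 4) * (v \<bullet> z)\<^sup>2 \<le> pw (norm v) (p - 2) * (norm z)\<^sup>2"
proof -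
  have "\<bar>v \<bullet> z\<bar>\<^sup>2 \<le> (norm v * norm z)\<^sup>2"
    by (rule power_mono[OF Cauchy_Schwarz_ineq2]) simp
  then have "norm v powr (p - 4) * (v \<bullet> z)\<^sup>2 \<le> norm v powr (p - 4) * (norm v * norm z)\<^sup>2"
    by (intro mult_left_mono) auto
  also have "\<dots> = (norm v powr (p - 4) * (norm v)\<^sup>2) * (norm z)\<^sup>2"
    by (simp add: power_mult_distrib)
  also have "norm v powr (p - 4) * (norm v)\<^sup>2 = pw (norm v) (p - 2)"
    using assms powr_add[of "norm v" "p - 4" 2] by (simp add: pw_pos)
  finally show ?thesis .
qed

lemma stability_middle_term_le:
  fixes w :: "real^'n \<Rightarrow> real"
  assumes p: "p \<ge> 2" and w: "AE x in lebesgue. w x \<ge> 0"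
    and int: "integrable lebesgue (\<lambda>x. w x * pw (norm (Du x)) (p - 2) * (norm (Dphi x))\<^sup>2)"
  shows "(p - 2) * (\<integral>x. (if Du x = 0 then 0 else w x * norm (Du x) powr (p - 4) * (Du x \<bullet> Dphi x)\<^sup>2) \<partial>lebesgue)
       \<le> (p - 2) * (\<integral>x. w x * pw (norm (Du x)) (p - 2) * (norm (Dphi x))\<^sup>2 \<partial>lebesgue)"
proof -
  have "AE x in lebesgue. (if Du x = 0 then 0 else w x * norm (Du x) powr (p - 4) * (Du x \<bullet> Dphi x)\<^sup>2)
      \<le> w x * pw (norm (Du x)) (p - 2) * (norm (Dphi x))\<^sup>2"
    using w
  proof eventually_elim
    case (elim x)
    show ?case
    proof (cases "Du x = 0")
      case False
      then show ?thesis
        using inner_square_powr_le[OF False, of p "Dphi x"] elim by (simp add: mult.assoc mult_left_mono)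
    qed (use elim in \<open>simp add: pw_def\<close>)
  qed
  moreover have "AE x in lebesgue. 0 \<le> w x * pw (norm (Du x)) (p - 2) * (norm (Dphi x))\<^sup>2"
    using w by eventually_elim (simp add: pw_def)
  ultimately show ?thesis
    using p by (intro mult_left_mono integral_mono_AE'[OF int]) auto
qed

locale weighted_plaplace =
  fixes p :: real and w g u :: "real^'n \<Rightarrow> real" and Du :: "real^'n \<Rightarrow> real^'n"
  assumes p_ge_2: "p \<ge> 2"
    and w: "loc_integrable w" "AE x in lebesgue. w x \<ge> 0"
    and g: "loc_integrable g" "AE x in lebesgue. g x \<ge> 0"
    and u_C1: "C1_grad u Du" and u_pos: "\<And>x. u x > 0"
begin

definition grad_energy :: "real \<Rightarrow> (real^'n \<Rightarrow> real) \<Rightarrow> real" where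
  "grad_energy a \<theta> =
    (\<integral>x. w x * (pw (norm (Du x)) (p - 2) * (norm (Du x))\<^sup>2 * u x powr a * (\<theta> x)\<^sup>2) \<partial>lebesgue)"

definition cross_energy :: "real \<Rightarrow> (real^'n \<Rightarrow> real) \<Rightarrow> (real^'n \<Rightarrow> real^'n) \<Rightarrow> real" where
  "cross_energy a \<theta> D\<theta> =
    (\<integral>x. w x * (pw (norm (Du x)) (p - 2) * u x powr (a + 1) * \<theta> x * (Du x \<bullet> D\<theta> x)) \<partial>lebesgue)"

definition test_energy :: "real \<Rightarrow> (real^'n \<Rightarrow> real^'n) \<Rightarrow> real" where
  "test_energy a D\<theta> =
    (\<integral>x. w x * (pw (norm (Du x)) (p - 2) * u x powr (a + 2) * (norm (D\<theta> x))\<^sup>2) \<partial>lebesgue)"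

definition source_energy :: "real \<Rightarrow> (real^'n \<Rightarrow> real) \<Rightarrow> real" where
  "source_energy a \<theta> = (\<integral>x. g x * (exp (1 / u x) * u x powr a * (\<theta> x)\<^sup>2) \<partial>lebesgue)"

definition test_p_energy :: "real \<Rightarrow> (real^'n \<Rightarrow> real^'n) \<Rightarrow> real" where
  "test_p_energy b D\<psi> = (\<integral>x. w x * u x powr b * norm (D\<psi> x) powr p \<partial>lebesgue)"

lemma continuous_on_u: "continuous_on UNIV u"
  using u_C1 by (rule C1_grad_continuous)

lemma continuous_on_Du: "continuous_on UNIV Du"
  using u_C1 by (simp add: C1_grad_def)

lemma continuous_on_u_powr: "continuous_on UNIV (\<lambda>x. u x powr a)"
  using u_pos by (intro continuous_on_powr continuous_on_u continuous_on_const) (metis less_irrefl)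

lemma continuous_on_exp_inverse_u: "continuous_on UNIV (\<lambda>x. exp (1 / u x))"
  using u_pos by (intro continuous_intros continuous_on_u) (metis less_irrefl)

lemma continuous_on_pw_norm_Du: "continuous_on UNIV (\<lambda>x. pw (norm (Du x)) (p - 2))"
  using p_ge_2 by (intro continuous_on_pw continuous_on_norm continuous_on_Du) auto

lemmas continuity =
  continuous_on_u continuous_on_Du continuous_on_u_powr continuous_on_exp_inverse_u
  continuous_on_pw_norm_Du

lemma integrable_w_times:
  assumes "C1c_grad \<theta> D\<theta>" "continuous_on UNIV f" "\<And>x. \<theta> x = 0 \<Longrightarrow> f x = 0"
  shows "integrable lebesgue (\<lambda>x. w x * f x)"
  using integrable_times_test_function[OF w(1) assms] .

lemma integrable_g_times:
  assumes "C1c_grad \<theta> D\<theta>" "continuous_on UNIV f" "\<And>x. \<theta> x = 0 \<Longrightarrow> f x = 0"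
  shows "integrable lebesgue (\<lambda>x. g x * f x)"
  using integrable_times_test_function[OF g(1) assms] .

lemma grad_energy_nonneg: "grad_energy a \<theta> \<ge> 0"
  unfolding grad_energy_def
  by (rule integral_nonneg_AE) (use w(2) in \<open>eventually_elim, simp add: pw_def\<close>)

lemma test_p_energy_nonneg: "test_p_energy b D\<psi> \<ge> 0"
  unfolding test_p_energy_def
  by (rule integral_nonneg_AE) (use w(2) in \<open>eventually_elim, simp\<close>)

lemma integrable_energy_densities:
  assumes \<theta>: "C1c_grad \<theta> D\<theta>"
  shows "integrable lebesgue (\<lambda>x. w x * (pw (norm (Du x)) (p - 2) * (norm (Du x))\<^sup>2 * u x powr a * (\<theta> x)\<^sup>2))"
    and "integrable lebesgue (\<lambda>x. w x * (pw (norm (Du x)) (p - 2) * u x powr (a + 1) * \<theta> x * (Du x \<bullet> D\<theta> x)))"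
    and "(\<And>x. \<theta> x \<ge> 0) \<Longrightarrow>
      integrable lebesgue (\<lambda>x. w x * (pw (norm (Du x)) (p - 2) * u x powr (a + 2) * (norm (D\<theta> x))\<^sup>2))"
proof -
  show "integrable lebesgue (\<lambda>x. w x * (pw (norm (Du x)) (p - 2) * u x powr (a + 2) * (norm (D\<theta> x))\<^sup>2))"
    if nonneg: "\<And>x. \<theta> x \<ge> 0"
  proof -
    have "D\<theta> x = 0" if "\<theta> x = 0" for x
      using C1_grad_min_imp_gradient_zero[of \<theta> D\<theta> x] \<theta> nonneg that by (simp add: C1c_grad_def)
    then show ?thesis
      by (intro integrable_w_times[OF \<theta>]) (auto intro!: continuous_intros continuity C1c_grad_continuous[OF \<theta>])
  qed
qed (rule integrable_w_times[OF \<theta>]; auto intro!: continuous_intros continuity C1c_grad_continuous[OF \<theta>])+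

lemma weak_solution_tested:
  assumes sol: "weak_solution p w g u Du" and \<theta>: "C1c_grad \<theta> D\<theta>"
  shows "(a + 1) * grad_energy a \<theta> + 2 * cross_energy a \<theta> D\<theta> = - source_energy (a + 1) \<theta>"
proof -
  have C\<theta>: "C1_grad \<theta> D\<theta>"
    using \<theta> by (simp add: C1c_grad_def)
  define \<zeta> where "\<zeta> = (\<lambda>x. u x powr (a + 1) * (\<theta> x * \<theta> x))"
  define D\<zeta> where "D\<zeta> = (\<lambda>x. u x powr (a + 1) *\<^sub>R (\<theta> x *\<^sub>R D\<theta> x + \<theta> x *\<^sub>R D\<theta> x)
    + (\<theta> x * \<theta> x) *\<^sub>R (((a + 1) * u x powr (a + 1 - 1)) *\<^sub>R Du x))"
  have "C1_grad \<zeta> D\<zeta>"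
    unfolding \<zeta>_def D\<zeta>_def by (rule C1_grad_mult[OF C1_grad_powr[OF u_C1 u_pos] C1_grad_mult[OF C\<theta> C\<theta>]])
  then have "C1c_grad \<zeta> D\<zeta>"
    using \<theta> by (rule C1c_grad_if_vanishing) (simp add: \<zeta>_def)
  then have tested: "(\<integral>x. w x * pw (norm (Du x)) (p - 2) * (Du x \<bullet> D\<zeta> x) \<partial>lebesgue)
      = (\<integral>x. g x * fE (u x) * \<zeta> x \<partial>lebesgue)"
    using sol by (simp add: weak_solution_def)
  have flux: "w x * pw (norm (Du x)) (p - 2) * (Du x \<bullet> D\<zeta> x)
      = (a + 1) * (w x * (pw (norm (Du x)) (p - 2) * (norm (Du x))\<^sup>2 * u x powr a * (\<theta> x)\<^sup>2))
        + 2 * (w x * (pw (norm (Du x)) (p - 2) * u x powr (a + 1) * \<theta> x * (Du x \<bullet> D\<theta> x)))" for x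
  proof -
    have "Du x \<bullet> D\<zeta> x = u x powr (a + 1) * (\<theta> x * (Du x \<bullet> D\<theta> x) + \<theta> x * (Du x \<bullet> D\<theta> x))
        + (\<theta> x * \<theta> x) * (((a + 1) * u x powr (a + 1 - 1)) * (norm (Du x))\<^sup>2)"
      by (simp only: D\<zeta>_def inner_add_right inner_scaleR_right dot_square_norm)
    then show ?thesis
      by (simp add: algebra_simps power2_eq_square)
  qed
  have source: "g x * fE (u x) * \<zeta> x = - (g x * (exp (1 / u x) * u x powr (a + 1) * (\<theta> x)\<^sup>2))" for x
    by (simp add: fE_def \<zeta>_def power2_eq_square)
  show ?thesis
    using tested integrable_energy_densities(1,2)[OF \<theta>, of a]
    by (simp add: flux source grad_energy_def cross_energy_def source_energy_def)
qed

lemma stability_tested: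
  assumes stab: "stable p w g u Du" and \<theta>: "C1c_grad \<theta> D\<theta>" and nonneg: "\<And>x. \<theta> x \<ge> 0"
  shows "source_energy a \<theta>
    \<le> (p - 1) * (((a + 2) / 2)\<^sup>2 * grad_energy a \<theta> + (a + 2) * cross_energy a \<theta> D\<theta> + test_energy a D\<theta>)"
proof -
  define \<gamma> where "\<gamma> = (a + 2) / 2"
  have C\<theta>: "C1_grad \<theta> D\<theta>"
    using \<theta> by (simp add: C1c_grad_def)
  define \<phi> where "\<phi> = (\<lambda>x. u x powr \<gamma> * \<theta> x)"
  define D\<phi> where "D\<phi> = (\<lambda>x. u x powr \<gamma> *\<^sub>R D\<theta> x + \<theta> x *\<^sub>R ((\<gamma> * u x powr (\<gamma> - 1)) *\<^sub>R Du x))"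
  have "C1_grad \<phi> D\<phi>"
    unfolding \<phi>_def D\<phi>_def by (rule C1_grad_mult[OF C1_grad_powr[OF u_C1 u_pos] C\<theta>])
  then have "C1c_grad \<phi> D\<phi>"
    using \<theta> by (rule C1c_grad_if_vanishing) (simp add: \<phi>_def)
  define E where "E = (\<integral>x. w x * pw (norm (Du x)) (p - 2) * (norm (D\<phi> x))\<^sup>2 \<partial>lebesgue)"
  define mid where "mid = (\<integral>x. (if Du x = 0 then 0
      else w x * norm (Du x) powr (p - 4) * (Du x \<bullet> D\<phi> x)\<^sup>2) \<partial>lebesgue)"
  have norm_D\<phi>: "(norm (D\<phi> x))\<^sup>2 = u x powr (a + 2) * (norm (D\<theta> x))\<^sup>2
      + 2 * \<gamma> * \<theta> x * u x powr (a + 1) * (Du x \<bullet> D\<theta> x)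
      + \<gamma>\<^sup>2 * (\<theta> x)\<^sup>2 * u x powr a * (norm (Du x))\<^sup>2" for x
    unfolding D\<phi>_def by (rule power2_norm_gradient_powr_mult) (simp add: \<gamma>_def)
  have energy: "w x * pw (norm (Du x)) (p - 2) * (norm (D\<phi> x))\<^sup>2
      = \<gamma>\<^sup>2 * (w x * (pw (norm (Du x)) (p - 2) * (norm (Du x))\<^sup>2 * u x powr a * (\<theta> x)\<^sup>2))
        + 2 * \<gamma> * (w x * (pw (norm (Du x)) (p - 2) * u x powr (a + 1) * \<theta> x * (Du x \<bullet> D\<theta> x)))
        + w x * (pw (norm (Du x)) (p - 2) * u x powr (a + 2) * (norm (D\<theta> x))\<^sup>2)" for x
    unfolding norm_D\<phi> by algebra
  have "\<gamma> + \<gamma> = a + 2"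
    by (simp add: \<gamma>_def field_simps)
  then have source: "g x * fE' (u x) * (\<phi> x)\<^sup>2 = g x * (exp (1 / u x) * u x powr a * (\<theta> x)\<^sup>2)" for x
    using fE'_mult_power2[OF u_pos[of x], of \<gamma> a "\<theta> x"] by (simp add: \<phi>_def mult.assoc)
  have "(\<integral>x. g x * fE' (u x) * (\<phi> x)\<^sup>2 \<partial>lebesgue) = source_energy a \<theta>"
    by (simp add: source source_energy_def)
  moreover have "E + (p - 2) * mid - (\<integral>x. g x * fE' (u x) * (\<phi> x)\<^sup>2 \<partial>lebesgue) \<ge> 0"
    using stab[unfolded stable_def, rule_format, OF \<open>C1c_grad \<phi> D\<phi>\<close>] unfolding E_def mid_def .
  ultimately have tested: "E + (p - 2) * mid - source_energy a \<theta> \<ge> 0"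
    by simp
  note integrable = integrable_energy_densities(1,2)[OF \<theta>, of a] integrable_energy_densities(3)[OF \<theta> nonneg, of a]
  then have E: "E = \<gamma>\<^sup>2 * grad_energy a \<theta> + 2 * \<gamma> * cross_energy a \<theta> D\<theta> + test_energy a D\<theta>"
    by (simp add: E_def energy grad_energy_def cross_energy_def test_energy_def)
  have "integrable lebesgue (\<lambda>x. w x * pw (norm (Du x)) (p - 2) * (norm (D\<phi> x))\<^sup>2)"
    unfolding energy using integrable by simp
  then have "(p - 2) * mid \<le> (p - 2) * E"
    unfolding mid_def E_def by (rule stability_middle_term_le[OF p_ge_2 w(2)])
  then have "source_energy a \<theta> \<le> (p - 1) * E"
    using tested by (simp add: algebra_simps)
  also have "\<dots> = (p - 1) * (((a + 2) / 2)\<^sup>2 * grad_energy a \<theta> + (a + 2) * cross_energy a \<theta> D\<theta> + test_energy a D\<theta>)"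
    by (simp add: E \<gamma>_def)
  finally show ?thesis .
qed

lemma source_energy_shift_le:
  assumes \<theta>: "C1c_grad \<theta> D\<theta>" and bounded: "\<And>x. u x \<le> M"
  shows "source_energy (a + 1) \<theta> \<le> M * source_energy a \<theta>"
proof -
  have integrable: "integrable lebesgue (\<lambda>x. g x * (exp (1 / u x) * u x powr b * (\<theta> x)\<^sup>2))" for b
    by (rule integrable_g_times[OF \<theta>]) (auto intro!: continuous_intros continuity C1c_grad_continuous[OF \<theta>])
  have "source_energy (a + 1) \<theta> \<le> (\<integral>x. M * (g x * (exp (1 / u x) * u x powr a * (\<theta> x)\<^sup>2)) \<partial>lebesgue)"
    unfolding source_energy_def
  proof (rule integral_mono_AE[OF integrable])
    show "integrable lebesgue (\<lambda>x. M * (g x * (exp (1 / u x) * u x powr a * (\<theta> x)\<^sup>2)))"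
      using integrable by simp
    show "AE x in lebesgue. g x * (exp (1 / u x) * u x powr (a + 1) * (\<theta> x)\<^sup>2)
        \<le> M * (g x * (exp (1 / u x) * u x powr a * (\<theta> x)\<^sup>2))"
      using g(2)
    proof eventually_elim
      case (elim x)
      have "u x powr (a + 1) = u x powr a * u x"
        using u_pos[of x] by (simp add: powr_add)
      also have "\<dots> \<le> u x powr a * M"
        using bounded[of x] by (intro mult_left_mono) auto
      finally have "exp (1 / u x) * u x powr (a + 1) * (\<theta> x)\<^sup>2 \<le> exp (1 / u x) * (u x powr a * M) * (\<theta> x)\<^sup>2"
        by (intro mult_right_mono mult_left_mono) auto
      then have "g x * (exp (1 / u x) * u x powr (a + 1) * (\<theta> x)\<^sup>2)
          \<le> g x * (exp (1 / u x) * (u x powr a * M) * (\<theta> x)\<^sup>2)"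
        using elim by (intro mult_left_mono) auto
      then show ?case
        by (simp add: algebra_simps)
    qed
  qed
  then show ?thesis
    by (simp add: source_energy_def)
qed

lemma integrable_test_p_density:
  assumes \<psi>: "C1c_grad \<psi> D\<psi>" "\<And>x. \<psi> x \<ge> 0"
  shows "integrable lebesgue (\<lambda>x. w x * (u x powr b * norm (D\<psi> x) powr p))"
proof -
  have "D\<psi> x = 0" if "\<psi> x = 0" for x
    using C1_grad_min_imp_gradient_zero[of \<psi> D\<psi> x] \<psi> that by (simp add: C1c_grad_def)
  then show ?thesis
    using p_ge_2 by (intro integrable_w_times[OF \<psi>(1)])
      (auto intro!: continuous_intros continuity C1c_grad_continuous[OF \<psi>(1)] continuous_on_powr')
qed

lemma cross_energy_young:
  assumes \<psi>: "C1c_grad \<psi> D\<psi>" "\<And>x. \<psi> x \<ge> 0" and "\<eta> > 0"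
  defines "\<theta> \<equiv> \<lambda>x. \<psi> x powr (p / 2)" and "D\<theta> \<equiv> \<lambda>x. (p / 2 * pw (\<psi> x) (p / 2 - 1)) *\<^sub>R D\<psi> x"
  shows "\<bar>cross_energy a \<theta> D\<theta>\<bar>
    \<le> p / 2 * (\<eta> * grad_energy a \<theta> + \<eta> powr (1 - p) * test_p_energy (a + p) D\<psi>)"
proof -
  have \<theta>: "C1c_grad \<theta> D\<theta>"
    unfolding \<theta>_def D\<theta>_def using C1c_grad_powr_nonneg[OF \<psi>, of "p / 2"] p_ge_2 by simp
  define cross where "cross = (\<lambda>x. w x * (pw (norm (Du x)) (p - 2) * u x powr (a + 1) * \<theta> x * (Du x \<bullet> D\<theta> x)))"
  define grad where "grad = (\<lambda>x. w x * (pw (norm (Du x)) (p - 2) * (norm (Du x))\<^sup>2 * u x powr a * (\<theta> x)\<^sup>2))"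
  define test where "test = (\<lambda>x. w x * (u x powr (a + p) * norm (D\<psi> x) powr p))"
  have "integrable lebesgue cross" "integrable lebesgue grad" "integrable lebesgue test"
    using integrable_energy_densities(1,2)[OF \<theta>] integrable_test_p_density[OF \<psi>]
    by (simp_all add: cross_def grad_def test_def)
  moreover have "AE x in lebesgue. \<bar>cross x\<bar> \<le> p / 2 * (\<eta> * grad x + \<eta> powr (1 - p) * test x)"
    using w(2)
  proof eventually_elim
    case (elim x)
    have "\<bar>Du x \<bullet> D\<theta> x\<bar> \<le> norm (Du x) * (p / 2 * pw (\<psi> x) (p / 2 - 1) * norm (D\<psi> x))"
      using Cauchy_Schwarz_ineq2[of "Du x" "D\<theta> x"] p_ge_2 by (simp add: D\<theta>_def abs_mult pw_def)
    from cross_density_young[OF elim norm_ge_zero \<psi>(2) norm_ge_zero u_pos p_ge_2 \<open>\<eta> > 0\<close> this]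
    show ?case
      by (simp add: cross_def grad_def test_def \<theta>_def)
  qed
  ultimately have "\<bar>\<integral>x. cross x \<partial>lebesgue\<bar> \<le> (\<integral>x. p / 2 * (\<eta> * grad x + \<eta> powr (1 - p) * test x) \<partial>lebesgue)"
    by (intro order.trans[OF integral_abs_bound] integral_mono_AE) auto
  also have "\<dots> = p / 2 * (\<eta> * integral\<^sup>L lebesgue grad + \<eta> powr (1 - p) * integral\<^sup>L lebesgue test)"
    using \<open>integrable lebesgue grad\<close> \<open>integrable lebesgue test\<close> by simp
  also have "\<dots> = p / 2 * (\<eta> * grad_energy a \<theta> + \<eta> powr (1 - p) * test_p_energy (a + p) D\<psi>)"
    by (simp add: grad_energy_def test_p_energy_def grad_def test_def mult.assoc)
  finally show ?thesis
    by (simp add: cross_energy_def cross_def)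
qed

lemma test_energy_young:
  assumes \<psi>: "C1c_grad \<psi> D\<psi>" "\<And>x. \<psi> x \<ge> 0" and "\<eta> > 0"
  defines "\<theta> \<equiv> \<lambda>x. \<psi> x powr (p / 2)" and "D\<theta> \<equiv> \<lambda>x. (p / 2 * pw (\<psi> x) (p / 2 - 1)) *\<^sub>R D\<psi> x"
  shows "test_energy a D\<theta>
    \<le> (p / 2)\<^sup>2 * (\<eta>\<^sup>2 * grad_energy a \<theta> + \<eta> powr (2 - p) * test_p_energy (a + p) D\<psi>)"
proof -
  have \<theta>: "C1c_grad \<theta> D\<theta>"
    unfolding \<theta>_def D\<theta>_def using C1c_grad_powr_nonneg[OF \<psi>, of "p / 2"] p_ge_2 by simp
  define test\<theta> where "test\<theta> = (\<lambda>x. w x * (pw (norm (Du x)) (p - 2) * u x powr (a + 2) * (norm (D\<theta> x))\<^sup>2))"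
  define grad where "grad = (\<lambda>x. w x * (pw (norm (Du x)) (p - 2) * (norm (Du x))\<^sup>2 * u x powr a * (\<theta> x)\<^sup>2))"
  define test where "test = (\<lambda>x. w x * (u x powr (a + p) * norm (D\<psi> x) powr p))"
  have "\<theta> x \<ge> 0" for x
    by (simp add: \<theta>_def)
  then have "integrable lebesgue test\<theta>" "integrable lebesgue grad" "integrable lebesgue test"
    using integrable_energy_densities(1,3)[OF \<theta>] integrable_test_p_density[OF \<psi>]
    by (simp_all add: test\<theta>_def grad_def test_def)
  moreover have "AE x in lebesgue. test\<theta> x \<le> (p / 2)\<^sup>2 * (\<eta>\<^sup>2 * grad x + \<eta> powr (2 - p) * test x)"
    using w(2)
  proof eventually_elim
    case (elim x)
    have norm_D\<theta>: "norm (D\<theta> x) = p / 2 * pw (\<psi> x) (p / 2 - 1) * norm (D\<psi> x)"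
      using p_ge_2 by (simp add: D\<theta>_def abs_mult pw_def)
    show ?case
      unfolding test\<theta>_def grad_def test_def \<theta>_def norm_D\<theta>
      by (rule test_density_young) (use elim \<psi>(2) u_pos p_ge_2 \<open>\<eta> > 0\<close> in auto)
  qed
  ultimately have "(\<integral>x. test\<theta> x \<partial>lebesgue) \<le> (\<integral>x. (p / 2)\<^sup>2 * (\<eta>\<^sup>2 * grad x + \<eta> powr (2 - p) * test x) \<partial>lebesgue)"
    by (intro integral_mono_AE) auto
  also have "\<dots> = (p / 2)\<^sup>2 * (\<eta>\<^sup>2 * integral\<^sup>L lebesgue grad + \<eta> powr (2 - p) * integral\<^sup>L lebesgue test)"
    using \<open>integrable lebesgue grad\<close> \<open>integrable lebesgue test\<close> by simp
  also have "\<dots> = (p / 2)\<^sup>2 * (\<eta>\<^sup>2 * grad_energy a \<theta> + \<eta> powr (2 - p) * test_p_energy (a + p) D\<psi>)"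
    by (simp add: grad_energy_def test_p_energy_def grad_def test_def mult.assoc)
  finally show ?thesis
    by (simp add: test_energy_def test\<theta>_def)
qed

lemma source_energy_ge:
  assumes \<psi>: "C1c_grad \<psi> D\<psi>" "\<And>x. \<psi> x \<ge> 0"
  shows "(\<integral>x. g x * u x powr a * \<psi> x powr p \<partial>lebesgue) \<le> source_energy a (\<lambda>x. \<psi> x powr (p / 2))"
  unfolding source_energy_def
proof (rule integral_mono_AE')
  have "C1c_grad (\<lambda>x. \<psi> x powr (p / 2)) (\<lambda>x. (p / 2 * pw (\<psi> x) (p / 2 - 1)) *\<^sub>R D\<psi> x)"
    using C1c_grad_powr_nonneg[OF \<psi>, of "p / 2"] p_ge_2 by simp
  then show "integrable lebesgue (\<lambda>x. g x * (exp (1 / u x) * u x powr a * (\<psi> x powr (p / 2))\<^sup>2))"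
    by (rule integrable_g_times) (use p_ge_2 in
      \<open>auto intro!: continuous_intros continuity C1c_grad_continuous[OF \<psi>(1)] continuous_on_powr' simp: \<psi>(2)\<close>)
  show "AE x in lebesgue. g x * u x powr a * \<psi> x powr p
      \<le> g x * (exp (1 / u x) * u x powr a * (\<psi> x powr (p / 2))\<^sup>2)"
    using g(2)
  proof eventually_elim
    case (elim x)
    have "(\<psi> x powr (p / 2))\<^sup>2 = \<psi> x powr p"
      using \<psi>(2)[of x] by (cases "\<psi> x = 0") (simp_all add: power2_powr)
    moreover have "1 * (g x * u x powr a * \<psi> x powr p) \<le> exp (1 / u x) * (g x * u x powr a * \<psi> x powr p)"
      using u_pos[of x] elim by (intro mult_right_mono) auto
    ultimately show ?case
      by (simp add: algebra_simps)
  qed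
  show "AE x in lebesgue. 0 \<le> g x * (exp (1 / u x) * u x powr a * (\<psi> x powr (p / 2))\<^sup>2)"
    using g(2) by eventually_elim simp
qed


lemma weighted_hardy_estimate:
  assumes sol: "weak_solution p w g u Du" and stab: "stable p w g u Du"
    and M: "M > 0" "\<And>x. u x \<le> M"
    and coercive: "M * (p - 1) * ((a + 2) / 2)\<^sup>2 < - (a + 1)"
  obtains K where "K > 0"
    and "\<And>\<psi> D\<psi>. C1c_grad \<psi> D\<psi> \<Longrightarrow> (\<And>x. \<psi> x \<ge> 0) \<Longrightarrow>
      (\<integral>x. g x * u x powr a * \<psi> x powr p \<partial>lebesgue) \<le> K * test_p_energy (a + p) D\<psi>"
proof -
  obtain K where "K > 0" and bound: "\<And>A B C' C E1 E2. A \<ge> 0 \<Longrightarrow> C \<ge> 0 \<Longrightarrow>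
      (a + 1) * A + 2 * B = - E1 \<Longrightarrow> E1 \<le> M * E2 \<Longrightarrow>
      E2 \<le> (p - 1) * (((a + 2) / 2)\<^sup>2 * A + (a + 2) * B + C') \<Longrightarrow>
      (\<And>\<eta>. \<eta> > 0 \<Longrightarrow> \<bar>B\<bar> \<le> p / 2 * (\<eta> * A + \<eta> powr (1 - p) * C)) \<Longrightarrow>
      (\<And>\<eta>. \<eta> > 0 \<Longrightarrow> C' \<le> (p / 2)\<^sup>2 * (\<eta>\<^sup>2 * A + \<eta> powr (2 - p) * C)) \<Longrightarrow>
      E2 \<le> K * C"
    using absorption[OF p_ge_2 M(1) coercive] by blast
  show thesis
  proof (rule that[OF \<open>K > 0\<close>])
    fix \<psi> :: "real^'n \<Rightarrow> real" and D\<psi> :: "real^'n \<Rightarrow> real^'n"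
    assume \<psi>: "C1c_grad \<psi> D\<psi>" "\<And>x. \<psi> x \<ge> 0"
    define \<theta> where "\<theta> = (\<lambda>x. \<psi> x powr (p / 2))"
    define D\<theta> where "D\<theta> = (\<lambda>x. (p / 2 * pw (\<psi> x) (p / 2 - 1)) *\<^sub>R D\<psi> x)"
    have \<theta>: "C1c_grad \<theta> D\<theta>" "\<And>x. \<theta> x \<ge> 0"
      unfolding \<theta>_def D\<theta>_def using C1c_grad_powr_nonneg[OF \<psi>, of "p / 2"] p_ge_2 by auto
    have "(\<integral>x. g x * u x powr a * \<psi> x powr p \<partial>lebesgue) \<le> source_energy a \<theta>"
      using source_energy_ge[OF \<psi>] by (simp add: \<theta>_def)
    also have "\<dots> \<le> K * test_p_energy (a + p) D\<psi>"
    proof (rule bound)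
      show "(a + 1) * grad_energy a \<theta> + 2 * cross_energy a \<theta> D\<theta> = - source_energy (a + 1) \<theta>"
        by (rule weak_solution_tested[OF sol \<theta>(1)])
      show "source_energy (a + 1) \<theta> \<le> M * source_energy a \<theta>"
        by (rule source_energy_shift_le[OF \<theta>(1) M(2)])
      show "source_energy a \<theta> \<le> (p - 1) * (((a + 2) / 2)\<^sup>2 * grad_energy a \<theta>
          + (a + 2) * cross_energy a \<theta> D\<theta> + test_energy a D\<theta>)"
        by (rule stability_tested[OF stab \<theta>])
    qed (use grad_energy_nonneg test_p_energy_nonneg cross_energy_young[OF \<psi>] test_energy_young[OF \<psi>]
      in \<open>auto simp: \<theta>_def D\<theta>_def\<close>)
    finally show "(\<integral>x. g x * u x powr a * \<psi> x powr p \<partial>lebesgue) \<le> K * test_p_energy (a + p) D\<psi>" .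
  qed
qed

end

theorem mainTheorem9:
  fixes p M :: real
    and w g u :: "real^'n \<Rightarrow> real"
    and Du :: "real^'n \<Rightarrow> real^'n"
  assumes hp: "p \<ge> 2"
    and hw: "loc_integrable w" "AE x in lebesgue. w x > 0"
    and hg: "loc_integrable g" "AE x in lebesgue. g x > 0"
    and hM: "M > 0" "p > 2 \<Longrightarrow> M < 4 / (p - 1)\<^sup>2"
    and hu: "C1_grad u Du" "\<forall>x. 0 < u x \<and> u x \<le> M"
    and hsol: "weak_solution p w g u Du"
    and hstab: "stable p w g u Du"
  shows "\<forall>\<beta>. 0 < \<beta> \<and> \<beta> < t_p M p \<longrightarrow>
           (\<exists>c>0. \<forall>\<psi> D\<psi>. C1c_grad \<psi> D\<psi> \<and> (\<forall>x. \<psi> x \<ge> 0) \<longrightarrow>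
              (\<integral>x. g x * u x powr (- 2 * \<beta> - p) * \<psi> x powr p \<partial>lebesgue)
              \<le> c * (\<integral>x. w x * u x powr (- 2 * \<beta>) * norm (D\<psi> x) powr p \<partial>lebesgue))"
  \<comment> \<open>The bound on \<open>M\<close> for \<open>p > 2\<close> only makes the range of \<open>\<beta>\<close> nonempty.\<close>
proof (intro allI impI)
  fix \<beta> :: real
  assume \<beta>: "0 < \<beta> \<and> \<beta> < t_p M p"
  have "AE x in lebesgue. w x \<ge> 0" "AE x in lebesgue. g x \<ge> 0"
    using hw(2) hg(2) by (auto elim: eventually_mono)
  then interpret weighted_plaplace p w g u Du
    using hp hw(1) hg(1) hu by unfold_locales auto
  define a where "a = - 2 * \<beta> - p"
  have "(a + 2) / 2 = - (\<beta> + (p - 2) / 2)" "- (a + 1) = 2 * \<beta> + p - 1"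
    by (simp_all add: a_def field_simps)
  then have coercive: "M * (p - 1) * ((a + 2) / 2)\<^sup>2 < - (a + 1)"
    using t_p_coercive[OF hp hM(1)] \<beta> by (simp only: power2_minus)
  have u_le: "\<And>x. u x \<le> M"
    using hu(2) by simp
  obtain K where "K > 0" and estimate: "\<And>\<psi> D\<psi>. C1c_grad \<psi> D\<psi> \<Longrightarrow> (\<And>x. \<psi> x \<ge> 0) \<Longrightarrow>
      (\<integral>x. g x * u x powr a * \<psi> x powr p \<partial>lebesgue) \<le> K * test_p_energy (a + p) D\<psi>"
    using weighted_hardy_estimate[OF hsol hstab hM(1) u_le coercive] by blast
  show "\<exists>c>0. \<forall>\<psi> D\<psi>. C1c_grad \<psi> D\<psi> \<and> (\<forall>x. \<psi> x \<ge> 0) \<longrightarrow>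
      (\<integral>x. g x * u x powr (- 2 * \<beta> - p) * \<psi> x powr p \<partial>lebesgue)
      \<le> c * (\<integral>x. w x * u x powr (- 2 * \<beta>) * norm (D\<psi> x) powr p \<partial>lebesgue)"
    using \<open>K > 0\<close> estimate by (auto simp: a_def test_p_energy_def)
qed

end
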